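(* Let $q$ be a prime, let $m \geq 1$ be an integer, and let $u$ be an integer with $0 \leq u \leq q-2$. Let $\mathcal{RM}_q(u,m) \subseteq \mathbb{F}_q^{q^m}$ be the code consisting of the vectors $\left(f(\alpha)\right)_{\alpha \in \mathbb{F}_q^m}$ (coordinates indexed by the $q^m$ points of $\mathbb{F}_q^m$ in a fixed order), where $f$ ranges over all polynomials in $\mathbb{F}_q[x_1,\ldots,x_m]$ of total degree at most $u$, and let $\mathcal{RM}^{\perp}_q(u,m)$ be its dual code with respect to the standard bilinear form $\langle \mathbf{x},\mathbf{y}\rangle=\sum_i x_i y_i$. Then for every codeword $\mathbf{c}$ of $\mathcal{RM}^{\perp}_q(u,m)$ of minimum nonzero Hamming weight, the $u+2$ points of $\mathbb{F}_q^m$ indexing the support of $\mathbf{c}$ lie on an affine line: that is, they can be written as $\mathbf{p}_1, \mathbf{p}_1 + t_1\mathbf{h}, \ldots, \mathbf{p}_1 + t_{u+1}\mathbf{h}$ for some $\mathbf{p}_1 \in \mathbb{F}_q^m$, some direction $\mathbf{h} \in \mathbb{F}_q^m \setminus \{\mathbf{0}\}$, and distinct nonzero elements $t_1,\ldots,t_{u+1} \in \mathbb{F}_q$.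
   Context: The support of a vector is the set of coordinates where it is nonzero; since coordinates are indexed by points of $\mathbb{F}_q^m$, the support is identified with a set of points of $\mathbb{F}_q^m$. For $u \leq q-2$ the minimum Hamming distance (minimum nonzero weight) of $\mathcal{RM}^{\perp}_q(u,m)$ equals $u+2$ (a known consequence of the Delsarte–Goethals–MacWilliams formula for the minimum distance of generalized Reed–Muller codes, using that $\mathcal{RM}^{\perp}_q(u,m)=\mathcal{RM}_q(m(q-1)-u-1,m)$). *)

theory Defs
  imports "HOL-Analysis.Finite_Cartesian_Product" "HOL-Computational_Algebra.Primes"
begin

text \<open>Points of F_q^m are vectors of type 'a ^ 'n with 'a a finite field of
prime order q and CARD('n) = m.  A word of length q^m is a function from points
to 'a (coordinates indexed by the points).\<close>

definition exps :: "nat \<Rightarrow> ('n::finite \<Rightarrow> nat) set" where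
  "exps u = {e. (\<Sum>i\<in>UNIV. e i) \<le> u}"

definition poly_eval :: "nat \<Rightarrow> (('n::finite \<Rightarrow> nat) \<Rightarrow> 'a::field) \<Rightarrow> 'a ^ 'n \<Rightarrow> 'a" where
  "poly_eval u c \<alpha> = (\<Sum>e\<in>exps u. c e * (\<Prod>i\<in>UNIV. (\<alpha> $ i) ^ (e i)))"

definition RM :: "nat \<Rightarrow> ('a::{finite,field} ^ 'n::finite \<Rightarrow> 'a) set" where
  "RM u = {poly_eval u c | c. True}"

definition RM_dual :: "nat \<Rightarrow> ('a::{finite,field} ^ 'n::finite \<Rightarrow> 'a) set" where
  "RM_dual u = {y. \<forall>x\<in>RM u. (\<Sum>\<alpha>\<in>UNIV. x \<alpha> * y \<alpha>) = 0}"

definition supp :: "('b \<Rightarrow> 'a::zero) \<Rightarrow> 'b set" where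
  "supp c = {\<alpha>. c \<alpha> \<noteq> 0}"

definition hweight :: "('b \<Rightarrow> 'a::zero) \<Rightarrow> nat" where
  "hweight c = card (supp c)"

end

theory Submission
  imports Defs
begin

text \<open>Write \<open>S\<close> for the support of a nonzero dual codeword \<open>y\<close>. If \<open>f\<close> is a polynomial of
degree at most \<open>u\<close> vanishing on \<open>S - {p}\<close>, then \<open>0 = \<Sum>f \<cdot> y = f p \<cdot> y p\<close>, so \<open>f p = 0\<close>.
A product of \<open>|S| - 1\<close> affine functions, one per point of \<open>S - {p}\<close>, vanishes there but not at
\<open>p\<close>; hence \<open>|S| \<ge> u + 2\<close>. Weight \<open>u + 2\<close> is attained on the diagonal \<open>{(t,\<dots>,t)}\<close>: as
\<open>q^(u+2) > q^(u+1)\<close>, some nonzero weights on \<open>u + 2\<close> field elements annihilate all moments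
of order at most \<open>u\<close>. Finally, if a minimum weight codeword had three non-collinear support
points \<open>p, q, s\<close>, an affine function vanishing at \<open>p, q\<close> but not at \<open>s\<close>, times \<open>u - 1\<close>
affine functions killing the remaining \<open>u - 1\<close> points, would contradict the first
observation.\<close>

definition monomial :: "('n::finite \<Rightarrow> nat) \<Rightarrow> 'a::field ^ 'n \<Rightarrow> 'a" where
  "monomial e \<alpha> = (\<Prod>i\<in>UNIV. (\<alpha> $ i) ^ (e i))"

lemma poly_eval_monomial: "poly_eval u c \<alpha> = (\<Sum>e\<in>exps u. c e * monomial e \<alpha>)"
  by (simp add: poly_eval_def monomial_def)

lemma finite_exps: "finite (exps d :: ('n::finite \<Rightarrow> nat) set)"
proof (rule finite_subset)
  show "exps d \<subseteq> Pi\<^sub>E UNIV (\<lambda>_::'n. {..d})"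
  proof
    fix e :: "'n \<Rightarrow> nat"
    assume "e \<in> exps d"
    hence "e i \<le> d" for i
      using member_le_sum[of i UNIV e] by (simp add: exps_def)
    thus "e \<in> Pi\<^sub>E UNIV (\<lambda>_. {..d})" by (simp add: PiE_UNIV_domain)
  qed
qed (auto intro: finite_PiE)

lemma exps_mono: "d \<le> d' \<Longrightarrow> exps d \<subseteq> exps d'"
  unfolding exps_def by auto

lemma RM_sum_monomials:
  fixes g :: "'j \<Rightarrow> ('n::finite \<Rightarrow> nat)" and a :: "'j \<Rightarrow> 'a::{finite,field}"
  assumes "finite J" "\<And>j. j \<in> J \<Longrightarrow> g j \<in> exps d"
  shows "(\<lambda>\<alpha>::'a^'n. \<Sum>j\<in>J. a j * monomial (g j) \<alpha>) \<in> RM d"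
proof -
  let ?c = "\<lambda>e. \<Sum>j\<in>{j. j \<in> J \<and> g j = e}. a j"
  have "poly_eval d ?c \<alpha> = (\<Sum>j\<in>J. a j * monomial (g j) \<alpha>)" for \<alpha> :: "'a^'n"
  proof -
    have "poly_eval d ?c \<alpha>
        = (\<Sum>e\<in>exps d. \<Sum>j\<in>{j. j \<in> J \<and> g j = e}. a j * monomial (g j) \<alpha>)"
      unfolding poly_eval_monomial sum_distrib_right by (intro sum.cong refl) auto
    also have "\<dots> = (\<Sum>j\<in>J. a j * monomial (g j) \<alpha>)"
      by (rule sum.group) (use assms finite_exps in auto)
    finally show ?thesis .
  qed
  thus ?thesis unfolding RM_def by (auto intro!: exI[of _ ?c])
qed

lemma RM_E:
  assumes "f \<in> RM d"
  obtains c where "f = poly_eval d c"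
  using assms unfolding RM_def by auto

lemma RM_mono:
  assumes "f \<in> (RM d :: ('a::{finite,field}^'n::finite \<Rightarrow> 'a) set)" "d \<le> d'"
  shows "f \<in> RM d'"
proof -
  obtain c where f: "f = poly_eval d c" using assms(1) by (rule RM_E)
  have "(\<lambda>\<alpha>::'a^'n. \<Sum>e\<in>exps d. c e * monomial (id e) \<alpha>) \<in> RM d'"
    by (rule RM_sum_monomials) (use finite_exps exps_mono[OF assms(2)] in auto)
  thus ?thesis using f by (simp add: poly_eval_monomial[abs_def])
qed

lemma RM_add:
  assumes "f \<in> (RM d :: ('a::{finite,field}^'n::finite \<Rightarrow> 'a) set)" "g \<in> RM d"
  shows "(\<lambda>\<alpha>. f \<alpha> + g \<alpha>) \<in> RM d"
proof -
  obtain c where f: "f = poly_eval d c" using assms(1) by (rule RM_E)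
  obtain c' where g: "g = poly_eval d c'" using assms(2) by (rule RM_E)
  have "(\<lambda>\<alpha>. f \<alpha> + g \<alpha>) = poly_eval d (\<lambda>e. c e + c' e)"
    unfolding f g poly_eval_monomial by (auto simp: sum.distrib algebra_simps)
  thus ?thesis unfolding RM_def by auto
qed

lemma RM_cmult:
  assumes "f \<in> (RM d :: ('a::{finite,field}^'n::finite \<Rightarrow> 'a) set)"
  shows "(\<lambda>\<alpha>. k * f \<alpha>) \<in> RM d"
proof -
  obtain c where f: "f = poly_eval d c" using assms by (rule RM_E)
  have "(\<lambda>\<alpha>. k * f \<alpha>) = poly_eval d (\<lambda>e. k * c e)"
    unfolding f poly_eval_monomial by (auto simp: sum_distrib_left algebra_simps)
  thus ?thesis unfolding RM_def by auto
qed

lemma RM_const: "(\<lambda>\<alpha>::'a::{finite,field}^'n::finite. k) \<in> RM d"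
proof -
  have "(\<lambda>\<alpha>::'a^'n. \<Sum>j\<in>{()}. k * monomial ((\<lambda>_. 0)::'n \<Rightarrow> nat) \<alpha>) \<in> RM d"
    by (rule RM_sum_monomials) (auto simp: exps_def)
  thus ?thesis by (simp add: monomial_def)
qed

lemma RM_coordinate: "(\<lambda>\<alpha>::'a::{finite,field}^'n::finite. \<alpha> $ i) \<in> RM 1"
proof -
  let ?e = "\<lambda>j::'n. if j = i then 1 else (0::nat)"
  have "monomial ?e \<alpha> = \<alpha> $ i" for \<alpha> :: "'a^'n"
  proof -
    have "monomial ?e \<alpha> = (\<Prod>j\<in>UNIV. if j = i then \<alpha> $ i else 1)"
      unfolding monomial_def by (intro prod.cong) auto
    thus ?thesis by simp
  qed
  moreover have "(\<lambda>\<alpha>::'a^'n. \<Sum>j\<in>{()}. 1 * monomial ?e \<alpha>) \<in> RM 1"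
    by (rule RM_sum_monomials) (auto simp: exps_def)
  ultimately show ?thesis by simp
qed

lemma RM_coordinate_minus_const: "(\<lambda>\<alpha>::'a::{finite,field}^'n::finite. \<alpha> $ i - b) \<in> RM 1"
  using RM_add[OF RM_coordinate RM_const, of i "- b"] by simp

lemma RM_mult:
  assumes "f \<in> (RM d1 :: ('a::{finite,field}^'n::finite \<Rightarrow> 'a) set)" "g \<in> RM d2"
  shows "(\<lambda>\<alpha>. f \<alpha> * g \<alpha>) \<in> RM (d1 + d2)"
proof -
  obtain c where f: "f = poly_eval d1 c" using assms(1) by (rule RM_E)
  obtain c' where g: "g = poly_eval d2 c'" using assms(2) by (rule RM_E)
  let ?h = "\<lambda>\<alpha>::'a^'n. \<Sum>p\<in>exps d1 \<times> exps d2.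
              (c (fst p) * c' (snd p)) * monomial (\<lambda>i. fst p i + snd p i) \<alpha>"
  have "?h \<in> RM (d1 + d2)"
    by (rule RM_sum_monomials)
      (use finite_exps[of d1] finite_exps[of d2] in \<open>auto simp: exps_def sum.distrib intro: add_mono\<close>)
  moreover have "f \<alpha> * g \<alpha> = ?h \<alpha>" for \<alpha>
    unfolding f g poly_eval_monomial sum_product sum.cartesian_product
    by (intro sum.cong refl) (simp add: monomial_def power_add prod.distrib mult_ac split: prod.splits)
  ultimately show ?thesis by simp
qed

lemma RM_prod:
  assumes "finite A" "\<And>s. s \<in> A \<Longrightarrow> f s \<in> (RM 1 :: ('a::{finite,field}^'n::finite \<Rightarrow> 'a) set)"
  shows "(\<lambda>\<alpha>. \<Prod>s\<in>A. f s \<alpha>) \<in> RM (card A)"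
  using assms
proof (induction A rule: finite_induct)
  case empty
  thus ?case using RM_const[of 1] by simp
next
  case (insert x F)
  have "(\<lambda>\<alpha>. f x \<alpha> * (\<Prod>s\<in>F. f s \<alpha>)) \<in> RM (1 + card F)"
    by (rule RM_mult) (use insert in auto)
  thus ?case using insert by simp
qed

lemma RM_vanishing_on_avoiding:
  fixes p :: "'a::{finite,field}^'n::finite"
  assumes "p \<notin> A"
  obtains f where "f \<in> RM (card A)" "\<And>s. s \<in> A \<Longrightarrow> f s = 0" "f p \<noteq> 0"
proof
  define I where "I s = (SOME i. s $ i \<noteq> p $ i)" for s
  have I: "s $ I s \<noteq> p $ I s" if "s \<in> A" for s
    unfolding I_def by (rule someI_ex) (metis assms that vec_eq_iff)
  let ?f = "\<lambda>\<alpha>. \<Prod>s\<in>A. \<alpha> $ I s - s $ I s"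
  show "?f \<in> RM (card A)" by (intro RM_prod RM_coordinate_minus_const) auto
  show "?f s = 0" if "s \<in> A" for s using that by (intro prod_zero) auto
  show "?f p \<noteq> 0" using I by (auto dest: sym)
qed

lemma affine_vanishing_off_line:
  fixes p q s :: "'a::{finite,field}^'n::finite"
  assumes "p \<noteq> q" "\<nexists>r. s = p + r *s (q - p)"
  obtains l where "l \<in> RM 1" "l p = 0" "l q = 0" "l s \<noteq> 0"
proof -
  define v where "v = q - p"
  define w where "w = s - p"
  have "v \<noteq> 0" using assms(1) by (simp add: v_def)
  then obtain i where vi: "v $ i \<noteq> 0" by (auto simp: vec_eq_iff)
  have "w - (w $ i / v $ i) *s v \<noteq> 0"
    using assms(2) by (auto simp: v_def w_def algebra_simps)
  then obtain j where wj: "w $ j - (w $ i / v $ i) * v $ j \<noteq> 0" by (auto simp: vec_eq_iff)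
  let ?l = "\<lambda>\<alpha>::'a^'n. (\<alpha> $ j - p $ j) + (- (v $ j / v $ i)) * (\<alpha> $ i - p $ i)"
  show thesis
  proof (rule that[of ?l])
    show "?l \<in> RM 1" by (intro RM_add RM_cmult RM_coordinate_minus_const)
    show "?l q = 0" using vi by (simp add: v_def field_simps)
    show "?l s \<noteq> 0" using wj vi by (simp add: w_def field_simps)
  qed simp
qed

lemma RM_dual_vanishes_at_support_point:
  fixes y :: "'a::{finite,field}^'n::finite \<Rightarrow> 'a"
  assumes "y \<in> RM_dual u" "f \<in> RM u" "p \<in> supp y"
    and "\<And>s. s \<in> supp y - {p} \<Longrightarrow> f s = 0"
  shows "f p = 0"
proof -
  have "0 = (\<Sum>\<alpha>\<in>UNIV. f \<alpha> * y \<alpha>)" using assms(1,2) unfolding RM_dual_def by auto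
  also have "\<dots> = (\<Sum>\<alpha>\<in>UNIV. if \<alpha> = p then f p * y p else 0)"
    by (intro sum.cong refl) (use assms(4) in \<open>auto simp: supp_def\<close>)
  finally show ?thesis using assms(3) by (simp add: supp_def)
qed

lemma RM_dual_weight_ge:
  fixes y :: "'a::{finite,field}^'n::finite \<Rightarrow> 'a"
  assumes "y \<in> RM_dual u" "y \<noteq> (\<lambda>_. 0)"
  shows "u + 2 \<le> hweight y"
proof -
  obtain p where p: "p \<in> supp y" using assms(2) by (auto simp: supp_def)
  obtain f where f: "f \<in> RM (card (supp y - {p}))" "\<And>s. s \<in> supp y - {p} \<Longrightarrow> f s = 0"
    "f p \<noteq> 0"
    by (rule RM_vanishing_on_avoiding[of p "supp y - {p}"]) auto
  have "\<not> card (supp y - {p}) \<le> u"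
    using RM_dual_vanishes_at_support_point[OF assms(1) RM_mono[OF f(1)] p f(2)] f(3) by blast
  thus ?thesis using p unfolding hweight_def by simp
qed

lemma exists_moment_annihilator:
  fixes T :: "'a::{finite,field} set"
  assumes "u + 1 < card T"
  obtains \<mu> where "\<exists>t\<in>T. \<mu> t \<noteq> 0" "\<And>k. k \<le> u \<Longrightarrow> (\<Sum>t\<in>T. \<mu> t * t ^ k) = 0"
proof -
  let ?q = "CARD('a)"
  have q: "2 \<le> ?q" using card_mono[of UNIV "{0::'a, 1}"] by simp
  define M where "M l = restrict (\<lambda>k. \<Sum>t\<in>T. l t * t ^ k) {..u}" for l :: "'a \<Rightarrow> 'a"
  have M: "M ` (T \<rightarrow>\<^sub>E UNIV) \<subseteq> {..u} \<rightarrow>\<^sub>E UNIV"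
    unfolding M_def by (intro image_subsetI restrict_PiE) auto
  have "\<not> inj_on M (T \<rightarrow>\<^sub>E UNIV)"
  proof
    assume "inj_on M (T \<rightarrow>\<^sub>E UNIV)"
    hence "card (T \<rightarrow>\<^sub>E (UNIV :: 'a set)) \<le> card ({..u} \<rightarrow>\<^sub>E (UNIV :: 'a set))"
      using M by (rule card_inj_on_le) (simp add: finite_PiE)
    hence "?q ^ card T \<le> ?q ^ (u + 1)" by (simp add: card_PiE)
    moreover have "?q ^ (u + 1) < ?q ^ card T" using q assms by (intro power_strict_increasing) auto
    ultimately show False by simp
  qed
  then obtain l1 l2 where l: "l1 \<in> T \<rightarrow>\<^sub>E UNIV" "l2 \<in> T \<rightarrow>\<^sub>E UNIV" "l1 \<noteq> l2" "M l1 = M l2"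
    unfolding inj_on_def by blast
  show thesis
  proof (rule that[of "\<lambda>t. l1 t - l2 t"])
    show "\<exists>t\<in>T. l1 t - l2 t \<noteq> 0" using l(1-3) by (metis PiE_ext eq_iff_diff_eq_0)
    show "(\<Sum>t\<in>T. (l1 t - l2 t) * t ^ k) = 0" if "k \<le> u" for k
    proof -
      have "(\<Sum>t\<in>T. l1 t * t ^ k) = (\<Sum>t\<in>T. l2 t * t ^ k)"
        using fun_cong[OF l(4), of k] that by (simp add: M_def)
      thus ?thesis by (simp add: left_diff_distrib sum_subtractf)
    qed
  qed
qed

text \<open>On the diagonal a monomial of total degree \<open>d\<close> evaluates to \<open>t ^ d\<close>, so the inner
product with a weighted diagonal word is a combination of moments of order at most \<open>u\<close>.\<close>

lemma RM_dual_diagonal_word: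
  fixes \<mu> :: "'a::{finite,field} \<Rightarrow> 'a"
  assumes "\<And>k. k \<le> u \<Longrightarrow> (\<Sum>t\<in>T. \<mu> t * t ^ k) = 0"
  shows "(\<lambda>\<alpha>::'a^'n::finite. \<Sum>t\<in>T. if \<alpha> = (\<chi> i. t) then \<mu> t else 0) \<in> RM_dual u"
  unfolding RM_dual_def
proof (intro CollectI ballI)
  fix x :: "'a^'n \<Rightarrow> 'a"
  assume "x \<in> RM u"
  then obtain c where x: "x = poly_eval u c" by (rule RM_E)
  have diag: "monomial e ((\<chi> i. t) :: 'a^'n) = t ^ (\<Sum>i\<in>UNIV. e i)" for e t
    by (simp add: monomial_def power_sum)
  have "(\<Sum>\<alpha>\<in>UNIV. x \<alpha> * (\<Sum>t\<in>T. if \<alpha> = (\<chi> i. t) then \<mu> t else 0))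
      = (\<Sum>t\<in>T. \<Sum>\<alpha>\<in>UNIV. if \<alpha> = (\<chi> i. t) then x \<alpha> * \<mu> t else 0)"
    unfolding sum_distrib_left by (subst sum.swap) (intro sum.cong refl, auto)
  also have "\<dots> = (\<Sum>t\<in>T. x (\<chi> i. t) * \<mu> t)" by simp
  also have "\<dots> = (\<Sum>t\<in>T. \<Sum>e\<in>exps u. c e * (\<mu> t * t ^ (\<Sum>i\<in>UNIV. e i)))"
    unfolding x poly_eval_monomial diag sum_distrib_right by (simp add: mult_ac)
  also have "\<dots> = (\<Sum>e\<in>exps u. c e * (\<Sum>t\<in>T. \<mu> t * t ^ (\<Sum>i\<in>UNIV. e i)))"
    unfolding sum_distrib_left by (rule sum.swap)
  also have "\<dots> = 0"
    by (intro sum.neutral ballI) (simp add: assms exps_def)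
  finally show "(\<Sum>\<alpha>\<in>UNIV. x \<alpha> * (\<Sum>t\<in>T. if \<alpha> = (\<chi> i. t) then \<mu> t else 0)) = 0" .
qed

lemma exists_RM_dual_weight_le:
  assumes "u + 2 \<le> CARD('a::{finite,field})"
  shows "\<exists>y :: 'a^'n::finite \<Rightarrow> 'a. y \<in> RM_dual u \<and> y \<noteq> (\<lambda>_. 0) \<and> hweight y \<le> u + 2"
proof -
  obtain T :: "'a set" where T: "card T = u + 2"
    using obtain_subset_with_card_n[OF assms] by blast
  then obtain \<mu> t0 where \<mu>: "t0 \<in> T" "\<mu> t0 \<noteq> 0" "\<And>k. k \<le> u \<Longrightarrow> (\<Sum>t\<in>T. \<mu> t * t ^ k) = 0"
    by (metis exists_moment_annihilator less_add_one one_add_one add.assoc)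
  define y where "y \<alpha> = (\<Sum>t\<in>T. if \<alpha> = (\<chi> i. t) then \<mu> t else 0)" for \<alpha> :: "'a^'n"
  have "y \<in> RM_dual u" unfolding y_def[abs_def] by (rule RM_dual_diagonal_word) (rule \<mu>(3))
  moreover have "y (\<chi> i. t0) \<noteq> 0" using \<mu>(1,2) by (simp add: y_def fun_eq_iff)
  moreover have "supp y \<subseteq> (\<lambda>t. (\<chi> i. t) :: 'a^'n) ` T"
    unfolding supp_def y_def by (auto intro: ccontr simp: image_iff)
  hence "hweight y \<le> u + 2"
    unfolding hweight_def by (metis T card_image_le card_mono finite_imageI finite le_trans)
  ultimately show ?thesis by blast
qed

lemma RM_dual_min_weight_support_collinear:
  fixes y :: "'a::{finite,field}^'n::finite \<Rightarrow> 'a"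
  assumes "y \<in> RM_dual u" "hweight y = u + 2"
    and "p \<in> supp y" "q \<in> supp y" "s \<in> supp y" "p \<noteq> q" "s \<noteq> p" "s \<noteq> q"
  shows "\<exists>r. s = p + r *s (q - p)"
proof (rule ccontr)
  assume "\<nexists>r. s = p + r *s (q - p)"
  with assms(6) obtain l where l: "l \<in> RM 1" "l p = 0" "l q = 0" "l s \<noteq> 0"
    by (rule affine_vanishing_off_line)
  let ?R = "supp y - {p, q, s}"
  obtain g where g: "g \<in> RM (card ?R)" "\<And>x. x \<in> ?R \<Longrightarrow> g x = 0" "g s \<noteq> 0"
    by (rule RM_vanishing_on_avoiding[of s ?R]) auto
  have "{p, q, s} \<subseteq> supp y" using assms(3-5) by blast
  hence "card ?R + card {p, q, s} = card (supp y)"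
    by (metis card_Diff_subset card_mono finite le_add_diff_inverse2)
  with assms(2,6-8) have "1 + card ?R = u" unfolding hweight_def by simp
  hence "(\<lambda>\<alpha>. l \<alpha> * g \<alpha>) \<in> RM u"
    using RM_mult[OF l(1) g(1)] by simp
  moreover have "l x * g x = 0" if "x \<in> supp y - {s}" for x
    using that l(2,3) g(2) by (cases "x = p \<or> x = q") auto
  ultimately have "l s * g s = 0"
    by (rule RM_dual_vanishes_at_support_point[OF assms(1) _ assms(5)])
  with l(4) g(3) show False by simp
qed

lemma line_enumeration:
  fixes S :: "('a::field ^ 'n::finite) set"
  assumes "card S = k + 2" "p \<in> S" "q \<in> S" "q \<noteq> p"
    and "\<And>s. s \<in> S - {p} \<Longrightarrow> \<exists>r. s = p + r *s (q - p)"
  shows "\<exists>h t. h \<noteq> 0 \<and> inj_on t {1..k+1} \<and> (\<forall>i\<in>{1..k+1}. t i \<noteq> 0) \<and>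
           S = insert p ((\<lambda>i. p + t i *s h) ` {1..k+1})"
proof -
  have "finite (S - {p})" using assms(1) card_ge_0_finite[of S] by simp
  moreover have "card (S - {p}) = k + 1" using assms(1,2) by (simp add: card_Diff_singleton_if)
  ultimately obtain g where g: "bij_betw g {1..k+1} (S - {p})"
    using ex_bij_betw_nat_finite_1 by metis
  define t where "t i = (SOME r. g i = p + r *s (q - p))" for i
  have gS: "g i \<in> S - {p}" if "i \<in> {1..k+1}" for i
    using bij_betw_apply[OF g that] .
  have gt: "g i = p + t i *s (q - p)" if "i \<in> {1..k+1}" for i
    unfolding t_def by (rule someI_ex, rule assms(5), rule gS[OF that])
  have "inj_on t {1..k+1}"
  proof (rule inj_onI)
    fix i j assume ij: "i \<in> {1..k+1}" "j \<in> {1..k+1}" "t i = t j"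
    hence "g i = g j" using gt by simp
    thus "i = j" by (rule inj_onD[OF bij_betw_imp_inj_on[OF g] _ ij(1,2)])
  qed
  moreover have "t i \<noteq> 0" if "i \<in> {1..k+1}" for i
    using gt[OF that] gS[OF that] by auto
  moreover have "(\<lambda>i. p + t i *s (q - p)) ` {1..k+1} = S - {p}"
  proof -
    have "(\<lambda>i. p + t i *s (q - p)) ` {1..k+1} = g ` {1..k+1}"
      using gt by (intro image_cong) auto
    also have "\<dots> = S - {p}" using bij_betw_imp_surj_on[OF g] .
    finally show ?thesis .
  qed
  ultimately show ?thesis using assms(2,4) by (intro exI[of _ "q - p"] exI[of _ t]) auto
qed

theorem lemma1:
  fixes c :: "'a::{finite,field} ^ 'n::finite \<Rightarrow> 'a" and u :: nat
  assumes "prime (CARD('a))"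
    and "u \<le> CARD('a) - 2"
    and "c \<in> RM_dual u" and "c \<noteq> (\<lambda>_. 0)"
    and "\<forall>c' :: 'a ^ 'n \<Rightarrow> 'a. c' \<in> RM_dual u \<and> c' \<noteq> (\<lambda>_. 0) \<longrightarrow> hweight c \<le> hweight c'"
  shows "\<exists>(p :: 'a ^ 'n) (h :: 'a ^ 'n) (t :: nat \<Rightarrow> 'a).
           h \<noteq> 0 \<and> inj_on t {1..u+1} \<and> (\<forall>i\<in>{1..u+1}. t i \<noteq> 0) \<and>
           supp c = insert p ((\<lambda>i. p + t i *s h) ` {1..u+1})"
proof -
  have "u + 2 \<le> CARD('a)" using assms(2) prime_ge_2_nat[OF assms(1)] by arith
  then obtain y :: "'a^'n \<Rightarrow> 'a" where y: "y \<in> RM_dual u" "y \<noteq> (\<lambda>_. 0)" "hweight y \<le> u + 2"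
    using exists_RM_dual_weight_le by blast
  have "hweight c \<le> u + 2" using assms(5) y by fastforce
  moreover have "u + 2 \<le> hweight c" by (rule RM_dual_weight_ge[OF assms(3,4)])
  ultimately have weight: "card (supp c) = u + 2" unfolding hweight_def by simp
  hence "supp c \<noteq> {}" by auto
  then obtain p where p: "p \<in> supp c" by blast
  have "card (supp c - {p}) = u + 1"
    using weight p card_ge_0_finite[of "supp c"] by (simp add: card_Diff_singleton)
  hence "supp c - {p} \<noteq> {}" by (metis card.empty zero_neq_one add_is_0)
  then obtain q where q: "q \<in> supp c" "q \<noteq> p" by blast
  have on_line: "\<exists>r. s = p + r *s (q - p)" if "s \<in> supp c - {p}" for s
  proof (cases "s = q")
    case True
    thus ?thesis by (intro exI[of _ 1]) simp
  next
    case False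
    with that p q weight show ?thesis
      by (intro RM_dual_min_weight_support_collinear[OF assms(3)]) (auto simp: hweight_def)
  qed
  show ?thesis using line_enumeration[OF weight p q on_line] by blast
qed

end
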